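(* Let $f:X\to X$ be a piecewise contracting map on a compact, locally connected metric space $(X,d)$, and let $L$, $\Omega$ and $\Lambda$ denote its limit set, non-wandering set and attractor. Then (i) $L\subset\Omega\subset\Lambda$; (ii) every non-wandering point lying in the interior (in $X$) of $\tilde X$ is recurrent, i.e. if $x\in\operatorname{int}(\tilde X)\cap\Omega$ then $x\in\omega(x)$.
   Context: A map $f:X\to X$ on a compact, locally connected metric space $(X,d)$ is piecewise contracting if there are $N\ge2$ non-empty, pairwise disjoint open sets $X_1,\dots,X_N$ with $X=\bigcup_i\overline{X_i}$, a constant $\lambda\in(0,1)$ with $d(f(x),f(y))\le\lambda d(x,y)$ for all $x,y$ in the same $X_i$, and such that $\tilde X:=\bigcap_{n\ge0}f^{-n}(X\setminus\Delta)\neq\emptyset$, where $\Delta:=X\setminus\bigcup_iX_i$ ($f$ is arbitrary on $\Delta$). For $x\in\tilde X$, $\omega(x)$ is the set of $y\in X$ such that $f^{n_k}(x)\to y$ for some divergent sequence $(n_k)$; the limit set is $L:=\overline{\bigcup_{x\in\tilde X}\omega(x)}$. A point $x\in\tilde X$ is recurrent if $x\in\omega(x)$. A point $x\in X$ is non-wandering if for every $\epsilon>0$ there is a divergent sequence $(n_k)$ with $f^{n_k}(B(x,\epsilon)\cap\tilde X)\cap B(x,\epsilon)\neq\emptyset$ for all $k$; $\Omega$ is the set of non-wandering points. For $A\subset X$ let $F_i(A):=\overline{f(A\cap X_i)}$; an atom of generation $n\ge1$ is a set of the form $F_{i_n}\circ\cdots\circ F_{i_1}(X)$ with $i_1,\dots,i_n\in\{1,\dots,N\}$;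 $\mathcal A_n$ is the set of atoms of generation $n$, $\Lambda_n:=\bigcup_{A\in\mathcal A_n}A$, and the attractor is $\Lambda:=\bigcap_{n\ge1}\Lambda_n$. *)

theory Defs
  imports "HOL-Analysis.Analysis"
begin

text \<open>The space X is a subset of a metric-space type, with the induced metric and
  subspace topology. The pieces are X_0,...,X_{N-1}, given by P :: nat => 'a set.\<close>

definition pc_Delta :: "'a set \<Rightarrow> nat \<Rightarrow> (nat \<Rightarrow> 'a set) \<Rightarrow> 'a set" where
  "pc_Delta X N P = X - (\<Union>i<N. P i)"

definition pc_Xtilde :: "'a set \<Rightarrow> ('a \<Rightarrow> 'a) \<Rightarrow> nat \<Rightarrow> (nat \<Rightarrow> 'a set) \<Rightarrow> 'a set" where
  "pc_Xtilde X f N P = (\<Inter>n. {x \<in> X. (f ^^ n) x \<in> X - pc_Delta X N P})"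

definition piecewise_contracting ::
  "'a::metric_space set \<Rightarrow> ('a \<Rightarrow> 'a) \<Rightarrow> nat \<Rightarrow> (nat \<Rightarrow> 'a set) \<Rightarrow> real \<Rightarrow> bool" where
  "piecewise_contracting X f N P lam \<longleftrightarrow>
     compact X \<and> locally connected X \<and> f ` X \<subseteq> X \<and> N \<ge> 2 \<and>
     (\<forall>i<N. openin (top_of_set X) (P i) \<and> P i \<noteq> {}) \<and>
     (\<forall>i<N. \<forall>j<N. i \<noteq> j \<longrightarrow> P i \<inter> P j = {}) \<and>
     X = (\<Union>i<N. closure (P i)) \<and>
     0 < lam \<and> lam < 1 \<and>
     (\<forall>i<N. \<forall>x\<in>P i. \<forall>y\<in>P i. dist (f x) (f y) \<le> lam * dist x y) \<and>
     pc_Xtilde X f N P \<noteq> {}"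

definition pc_omega :: "'a::metric_space set \<Rightarrow> ('a \<Rightarrow> 'a) \<Rightarrow> 'a \<Rightarrow> 'a set" where
  "pc_omega X f x = {y \<in> X. \<exists>n::nat \<Rightarrow> nat. filterlim n at_top sequentially \<and>
                         (\<lambda>k. (f ^^ n k) x) \<longlonglongrightarrow> y}"

definition pc_limit_set ::
  "'a::metric_space set \<Rightarrow> ('a \<Rightarrow> 'a) \<Rightarrow> nat \<Rightarrow> (nat \<Rightarrow> 'a set) \<Rightarrow> 'a set" where
  "pc_limit_set X f N P = closure (\<Union>x\<in>pc_Xtilde X f N P. pc_omega X f x)"

definition pc_recurrent ::
  "'a::metric_space set \<Rightarrow> ('a \<Rightarrow> 'a) \<Rightarrow> nat \<Rightarrow> (nat \<Rightarrow> 'a set) \<Rightarrow> 'a \<Rightarrow> bool" where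
  "pc_recurrent X f N P x \<longleftrightarrow> x \<in> pc_Xtilde X f N P \<and> x \<in> pc_omega X f x"

definition pc_nonwandering ::
  "'a::metric_space set \<Rightarrow> ('a \<Rightarrow> 'a) \<Rightarrow> nat \<Rightarrow> (nat \<Rightarrow> 'a set) \<Rightarrow> 'a set" where
  "pc_nonwandering X f N P = {x \<in> X. \<forall>\<epsilon>>0. \<exists>n::nat \<Rightarrow> nat.
      filterlim n at_top sequentially \<and>
      (\<forall>k. (f ^^ n k) ` (ball x \<epsilon> \<inter> X \<inter> pc_Xtilde X f N P) \<inter> (ball x \<epsilon> \<inter> X) \<noteq> {})}"

definition pc_F :: "('a::metric_space \<Rightarrow> 'a) \<Rightarrow> (nat \<Rightarrow> 'a set) \<Rightarrow> nat \<Rightarrow> 'a set \<Rightarrow> 'a set" where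
  "pc_F f P i A = closure (f ` (A \<inter> P i))"

text \<open>F_{i_n} o ... o F_{i_1} (X), with the word given by is(0)=i_1, ..., is(n-1)=i_n.\<close>
fun pc_iterF :: "'a::metric_space set \<Rightarrow> ('a \<Rightarrow> 'a) \<Rightarrow> (nat \<Rightarrow> 'a set) \<Rightarrow> (nat \<Rightarrow> nat) \<Rightarrow> nat \<Rightarrow> 'a set" where
  "pc_iterF X f P is 0 = X"
| "pc_iterF X f P is (Suc n) = pc_F f P (is n) (pc_iterF X f P is n)"

definition pc_atoms ::
  "'a::metric_space set \<Rightarrow> ('a \<Rightarrow> 'a) \<Rightarrow> nat \<Rightarrow> (nat \<Rightarrow> 'a set) \<Rightarrow> nat \<Rightarrow> 'a set set" where
  "pc_atoms X f N P n = {pc_iterF X f P is n | is. \<forall>k<n. is k < N}"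

definition pc_Lambda_n ::
  "'a::metric_space set \<Rightarrow> ('a \<Rightarrow> 'a) \<Rightarrow> nat \<Rightarrow> (nat \<Rightarrow> 'a set) \<Rightarrow> nat \<Rightarrow> 'a set" where
  "pc_Lambda_n X f N P n = \<Union>(pc_atoms X f N P n)"

definition pc_attractor ::
  "'a::metric_space set \<Rightarrow> ('a \<Rightarrow> 'a) \<Rightarrow> nat \<Rightarrow> (nat \<Rightarrow> 'a set) \<Rightarrow> 'a set" where
  "pc_attractor X f N P = (\<Inter>n\<in>{1..}. pc_Lambda_n X f N P n)"

end

theory Submission
  imports Defs
begin

text \<open>Call the points of \<open>pc_Xtilde\<close> regular. An \<open>\<omega>\<close>-limit point y of a regular orbit is
  non-wandering, because a later point of the same orbit close to y comes back close to y; as the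
  non-wandering set is closed, \<open>L \<subseteq> \<Omega>\<close>. A regular point returning near x at a time \<open>m \<ge> n\<close> is
  the n-th iterate of a regular point, hence lies in \<open>\<Lambda>\<^sub>n\<close>, a finite union of closed atoms;
  so \<open>\<Omega> \<subseteq> \<Lambda>\<^sub>n\<close> for every n.

  For recurrence, local connectedness gives a connected neighbourhood V of x consisting of regular
  points. No iterate of V meets \<open>\<Delta>\<close>, so each connected set \<open>f\<^sup>n(V)\<close> lies in a single piece and
  all iterates of f are non-expanding on V. The orbit of x therefore follows the orbit of any point
  of V that returns near x, and x returns near itself infinitely often.\<close>

lemma frequently_sequentially_iff_reindex:
  "frequently Q sequentially \<longleftrightarrow> (\<exists>r. filterlim r at_top sequentially \<and> (\<forall>k. Q (r k)))"
proof
  assume "frequently Q sequentially"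
  then obtain r where r: "\<forall>k. k \<le> r k \<and> Q (r k)"
    unfolding frequently_sequentially choice_iff by blast
  have "filterlim r at_top sequentially"
    by (rule filterlim_at_top_mono[OF filterlim_ident always_eventually]) (use r in blast)
  with r show "\<exists>r. filterlim r at_top sequentially \<and> (\<forall>k. Q (r k))"
    by blast
next
  assume "\<exists>r. filterlim r at_top sequentially \<and> (\<forall>k. Q (r k))"
  then obtain r where r: "filterlim r at_top sequentially" "\<And>k. Q (r k)"
    by blast
  show "frequently Q sequentially"
    unfolding frequently_sequentially
  proof
    fix M
    obtain k where "M \<le> r k"
      using r(1) unfolding filterlim_at_top eventually_sequentially by (metis le_refl)
    with r(2) show "\<exists>n\<ge>M. Q n"
      by blast
  qed
qed

lemma reindex_tendsto_iff_frequently_near: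
  fixes a :: "nat \<Rightarrow> 'a::metric_space"
  shows "(\<exists>r. filterlim r at_top sequentially \<and> (\<lambda>k. a (r k)) \<longlonglongrightarrow> y)
     \<longleftrightarrow> (\<forall>e>0. \<exists>\<^sub>F n in sequentially. dist (a n) y < e)"
proof safe
  fix r :: "nat \<Rightarrow> nat" and e :: real
  assume r: "filterlim r at_top sequentially" "(\<lambda>k. a (r k)) \<longlonglongrightarrow> y" and "e > 0"
  show "\<exists>\<^sub>F n in sequentially. dist (a n) y < e"
    unfolding frequently_sequentially
  proof
    fix M
    have "\<forall>\<^sub>F k in sequentially. M \<le> r k"
      using r(1) unfolding filterlim_at_top by blast
    then have "\<forall>\<^sub>F k in sequentially. M \<le> r k \<and> dist (a (r k)) y < e"
      using tendstoD[OF r(2) \<open>e > 0\<close>] by (rule eventually_conj)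
    then obtain K where "\<forall>k\<ge>K. M \<le> r k \<and> dist (a (r k)) y < e"
      unfolding eventually_sequentially by blast
    then show "\<exists>n\<ge>M. dist (a n) y < e"
      using le_refl by blast
  qed
next
  assume near: "\<forall>e>0. \<exists>\<^sub>F n in sequentially. dist (a n) y < e"
  have "\<forall>j. \<exists>n. j \<le> n \<and> dist (a n) y < inverse (real (Suc j))"
  proof
    fix j
    have "\<exists>\<^sub>F n in sequentially. dist (a n) y < inverse (real (Suc j))"
      by (rule near[rule_format]) simp
    then show "\<exists>n. j \<le> n \<and> dist (a n) y < inverse (real (Suc j))"
      unfolding frequently_sequentially by blast
  qed
  then obtain r where r: "\<forall>j. j \<le> r j \<and> dist (a (r j)) y < inverse (real (Suc j))"
    unfolding choice_iff by blast
  have "(\<lambda>j. dist (a (r j)) y) \<longlonglongrightarrow> 0"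
  proof (rule tendsto_sandwich[OF always_eventually always_eventually
        tendsto_const LIMSEQ_inverse_real_of_nat])
    show "\<forall>j. 0 \<le> dist (a (r j)) y"
      by simp
    show "\<forall>j. dist (a (r j)) y \<le> inverse (real (Suc j))"
      using r less_imp_le by blast
  qed
  then have "(\<lambda>j. a (r j)) \<longlonglongrightarrow> y"
    by (rule tendsto_dist_iff[THEN iffD2])
  moreover have "filterlim r at_top sequentially"
    by (rule filterlim_at_top_mono[OF filterlim_ident always_eventually]) (use r in blast)
  ultimately show "\<exists>r. filterlim r at_top sequentially \<and> (\<lambda>k. a (r k)) \<longlonglongrightarrow> y"
    by blast
qed

lemma mem_pc_omega_iff:
  "y \<in> pc_omega X f x \<longleftrightarrow> y \<in> X \<and> (\<forall>e>0. \<exists>\<^sub>F n in sequentially. dist ((f ^^ n) x) y < e)"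
  unfolding pc_omega_def reindex_tendsto_iff_frequently_near[symmetric] by blast

lemma funpow_apply_add: "(f ^^ m) ((f ^^ n) x) = (f ^^ (m + n)) x"
  by (simp add: funpow_add)

lemma mem_pc_Xtilde_iff:
  "x \<in> pc_Xtilde X f N P \<longleftrightarrow> (\<forall>n. (f ^^ n) x \<in> X \<and> (\<exists>i<N. (f ^^ n) x \<in> P i))"
proof -
  have "x \<in> X" if "\<forall>n. (f ^^ n) x \<in> X \<and> (\<exists>i<N. (f ^^ n) x \<in> P i)"
    using that[rule_format, of 0] by simp
  then show ?thesis
    by (auto simp: pc_Xtilde_def pc_Delta_def)
qed

lemma pc_Xtilde_subset: "pc_Xtilde X f N P \<subseteq> X"
  by (auto simp: pc_Xtilde_def)

lemma pc_Xtilde_subset_pieces: "pc_Xtilde X f N P \<subseteq> (\<Union>i<N. P i)"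
proof
  fix x assume "x \<in> pc_Xtilde X f N P"
  then have "\<exists>i<N. (f ^^ 0) x \<in> P i"
    unfolding mem_pc_Xtilde_iff by blast
  then show "x \<in> (\<Union>i<N. P i)"
    by auto
qed

lemma funpow_mem_pc_Xtilde:
  assumes "x \<in> pc_Xtilde X f N P"
  shows "(f ^^ m) x \<in> pc_Xtilde X f N P"
  using assms by (simp add: mem_pc_Xtilde_iff funpow_apply_add)

lemma mem_pc_nonwandering_iff:
  "x \<in> pc_nonwandering X f N P \<longleftrightarrow> x \<in> X \<and>
     (\<forall>e>0. \<exists>\<^sub>F n in sequentially. \<exists>z \<in> ball x e \<inter> pc_Xtilde X f N P. (f ^^ n) z \<in> ball x e)"
proof -
  have "(f ^^ n) ` (ball x e \<inter> X \<inter> pc_Xtilde X f N P) \<inter> (ball x e \<inter> X) \<noteq> {}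
      \<longleftrightarrow> (\<exists>z \<in> ball x e \<inter> pc_Xtilde X f N P. (f ^^ n) z \<in> ball x e)" for n e
    using pc_Xtilde_subset[of X f N P] funpow_mem_pc_Xtilde[of _ X f N P n] by blast
  then show ?thesis
    unfolding pc_nonwandering_def frequently_sequentially_iff_reindex by simp
qed

lemma pc_omega_subset_pc_nonwandering:
  assumes x: "x \<in> pc_Xtilde X f N P"
  shows "pc_omega X f x \<subseteq> pc_nonwandering X f N P"
proof
  fix y assume "y \<in> pc_omega X f x"
  then have y: "y \<in> X" and near: "\<And>e. e > 0 \<Longrightarrow> \<exists>\<^sub>F n in sequentially. dist ((f ^^ n) x) y < e"
    by (auto simp: mem_pc_omega_iff)
  have "\<exists>\<^sub>F n in sequentially. \<exists>z \<in> ball y e \<inter> pc_Xtilde X f N P. (f ^^ n) z \<in> ball y e"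
    if e: "e > 0" for e
    unfolding frequently_sequentially
  proof
    fix M
    obtain n0 where n0: "dist ((f ^^ n0) x) y < e"
      using near[OF e] by (auto simp: frequently_sequentially)
    obtain m where m: "m \<ge> M + n0" "dist ((f ^^ m) x) y < e"
      using near[OF e] by (auto simp: frequently_sequentially)
    have "(f ^^ (m - n0)) ((f ^^ n0) x) = (f ^^ m) x"
      using m(1) by (simp add: funpow_apply_add)
    then show "\<exists>n\<ge>M. \<exists>z \<in> ball y e \<inter> pc_Xtilde X f N P. (f ^^ n) z \<in> ball y e"
      using m n0 funpow_mem_pc_Xtilde[OF x]
      by (intro exI[of _ "m - n0"] conjI bexI[of _ "(f ^^ n0) x"]) (auto simp: dist_commute)
  qed
  with y show "y \<in> pc_nonwandering X f N P"
    by (simp add: mem_pc_nonwandering_iff)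
qed

lemma closed_pc_nonwandering:
  assumes "closed X"
  shows "closed (pc_nonwandering X f N P)"
  unfolding closure_subset_eq[symmetric]
proof
  fix y assume y: "y \<in> closure (pc_nonwandering X f N P)"
  have "pc_nonwandering X f N P \<subseteq> X"
    by (auto simp: mem_pc_nonwandering_iff)
  with y assms have "y \<in> X"
    using closure_minimal by blast
  moreover have "\<exists>\<^sub>F n in sequentially. \<exists>z \<in> ball y e \<inter> pc_Xtilde X f N P. (f ^^ n) z \<in> ball y e"
    if e: "e > 0" for e
  proof -
    obtain x where x: "x \<in> pc_nonwandering X f N P" "dist x y < e / 2"
      using y e unfolding closure_approachable by (metis half_gt_zero)
    have balls: "ball x (e / 2) \<subseteq> ball y e"
      using x(2) by metric
    have "e / 2 > 0"
      using e by simp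
    then have "\<exists>\<^sub>F n in sequentially. \<exists>z \<in> ball x (e / 2) \<inter> pc_Xtilde X f N P. (f ^^ n) z \<in> ball x (e / 2)"
      using x(1) unfolding mem_pc_nonwandering_iff by blast
    then show ?thesis
      by (rule frequently_elim1) (use balls in blast)
  qed
  ultimately show "y \<in> pc_nonwandering X f N P"
    by (simp add: mem_pc_nonwandering_iff)
qed

lemma closed_pc_iterF: "closed X \<Longrightarrow> closed (pc_iterF X f P w n)"
  by (cases n) (auto simp: pc_F_def)

lemma pc_iterF_cong: "(\<And>k. k < n \<Longrightarrow> w k = w' k) \<Longrightarrow> pc_iterF X f P w n = pc_iterF X f P w' n"
  by (induction n) auto

lemma finite_pc_atoms: "finite (pc_atoms X f N P n)"
proof -
  have "pc_atoms X f N P n \<subseteq> (\<lambda>w. pc_iterF X f P w n) ` ({..<n} \<rightarrow>\<^sub>E {..<N})"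
  proof
    fix A assume "A \<in> pc_atoms X f N P n"
    then obtain w where A: "A = pc_iterF X f P w n" and w: "\<forall>k<n. w k < N"
      unfolding pc_atoms_def by blast
    have "A = pc_iterF X f P (restrict w {..<n}) n"
      unfolding A by (rule pc_iterF_cong) simp
    moreover have "restrict w {..<n} \<in> {..<n} \<rightarrow>\<^sub>E {..<N}"
      using w by simp
    ultimately show "A \<in> (\<lambda>w. pc_iterF X f P w n) ` ({..<n} \<rightarrow>\<^sub>E {..<N})"
      by blast
  qed
  then show ?thesis
    by (rule finite_subset) (simp add: finite_PiE)
qed

lemma closed_pc_Lambda_n: "closed X \<Longrightarrow> closed (pc_Lambda_n X f N P n)"
  unfolding pc_Lambda_n_def
  by (rule closed_Union[OF finite_pc_atoms]) (auto simp: pc_atoms_def closed_pc_iterF)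

text \<open>Following the itinerary of x through the pieces exhibits an atom containing its n-th iterate.\<close>
lemma funpow_mem_pc_Lambda_n:
  assumes x: "x \<in> pc_Xtilde X f N P"
  shows "(f ^^ n) x \<in> pc_Lambda_n X f N P n"
proof -
  obtain w where w: "\<And>k. w k < N \<and> (f ^^ k) x \<in> P (w k)"
    using x unfolding mem_pc_Xtilde_iff by metis
  have "(f ^^ n) x \<in> pc_iterF X f P w n"
  proof (induction n)
    case 0
    then show ?case using x pc_Xtilde_subset[of X f N P] by auto
  next
    case (Suc n)
    then have "(f ^^ n) x \<in> pc_iterF X f P w n \<inter> P (w n)"
      using w by blast
    then show ?case
      using closure_subset by (fastforce simp: pc_F_def)
  qed
  moreover have "pc_iterF X f P w n \<in> pc_atoms X f N P n"
    unfolding pc_atoms_def using w by blast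
  ultimately show ?thesis
    unfolding pc_Lambda_n_def by blast
qed

lemma pc_nonwandering_subset_pc_Lambda_n:
  assumes "closed X"
  shows "pc_nonwandering X f N P \<subseteq> pc_Lambda_n X f N P n"
proof
  fix x assume x: "x \<in> pc_nonwandering X f N P"
  have "\<exists>y \<in> pc_Lambda_n X f N P n. dist y x < e" if e: "e > 0" for e
  proof -
    obtain m z where m: "m \<ge> n" and z: "z \<in> pc_Xtilde X f N P" "(f ^^ m) z \<in> ball x e"
      using x e unfolding mem_pc_nonwandering_iff frequently_sequentially by blast
    have "(f ^^ m) z = (f ^^ n) ((f ^^ (m - n)) z)"
      using m by (simp add: funpow_apply_add)
    then have "(f ^^ m) z \<in> pc_Lambda_n X f N P n"
      using funpow_mem_pc_Lambda_n[OF funpow_mem_pc_Xtilde[OF z(1)]] by simp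
    with z(2) show ?thesis
      by (auto simp: dist_commute)
  qed
  then have "x \<in> closure (pc_Lambda_n X f N P n)"
    by (simp add: closure_approachable)
  then show "x \<in> pc_Lambda_n X f N P n"
    using closed_pc_Lambda_n[OF assms] by (simp add: closure_closed)
qed

lemma connected_subset_pieces:
  assumes pieces_open: "\<forall>i<N. openin (top_of_set X) (P i)"
    and pieces_disjoint: "\<forall>i<N. \<forall>j<N. i \<noteq> j \<longrightarrow> P i \<inter> P j = {}"
    and S: "connected S" "S \<subseteq> X" "S \<subseteq> (\<Union>i<N. P i)" "S \<noteq> {}"
  obtains i where "i < N" "S \<subseteq> P i"
proof -
  obtain i where i: "i < N" "S \<inter> P i \<noteq> {}"
    using S(3,4) by blast
  define Q where "Q = (\<Union>j \<in> {j. j < N \<and> j \<noteq> i}. P j)"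
  have "S \<inter> Q = {}"
  proof (rule ccontr)
    assume "S \<inter> Q \<noteq> {}"
    moreover have "connectedin (top_of_set X) S"
      using S(1,2) by (simp add: connectedin_subtopology)
    moreover have "openin (top_of_set X) Q"
      unfolding Q_def using pieces_open by (intro openin_Union) auto
    moreover have "S \<subseteq> P i \<union> Q" "P i \<inter> Q \<inter> S = {}"
      using S(3) pieces_disjoint i(1) by (auto simp: Q_def)
    ultimately show False
      using connectedinD[of _ S "P i" Q] pieces_open i by (auto simp: Int_commute)
  qed
  with S(3) i(1) have "S \<subseteq> P i"
    by (auto simp: Q_def)
  with i(1) show thesis
    by (rule that)
qed

text \<open>A connected set of points that never hit \<open>\<Delta>\<close> stays connected, hence inside a single piece,
  at every step; so the contraction applies to all its iterates.\<close>
lemma lipschitz_on_funpow_connected: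
  assumes pieces_open: "\<forall>i<N. openin (top_of_set X) (P i)"
    and pieces_disjoint: "\<forall>i<N. \<forall>j<N. i \<noteq> j \<longrightarrow> P i \<inter> P j = {}"
    and lipschitz: "\<forall>i<N. lam-lipschitz_on (P i) f"
    and V: "connected V" "V \<subseteq> pc_Xtilde X f N P" "V \<noteq> {}"
  shows "(lam ^ n)-lipschitz_on V (f ^^ n)"
proof -
  have "connected ((f ^^ n) ` V) \<and> (lam ^ n)-lipschitz_on V (f ^^ n)"
  proof (induction n)
    case 0
    then show ?case
      using V(1) by (simp add: lipschitz_on_def)
  next
    case (Suc n)
    let ?S = "(f ^^ n) ` V"
    have S_Xtilde: "?S \<subseteq> pc_Xtilde X f N P"
      using V(2) by (auto intro!: funpow_mem_pc_Xtilde)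
    have "?S \<subseteq> X"
      using S_Xtilde pc_Xtilde_subset by (rule order_trans)
    moreover have "?S \<subseteq> (\<Union>i<N. P i)"
      using S_Xtilde pc_Xtilde_subset_pieces by (rule order_trans)
    ultimately obtain i where i: "i < N" "?S \<subseteq> P i"
      using connected_subset_pieces[OF pieces_open pieces_disjoint] Suc.IH V(3) by blast
    then have f_lipschitz: "lam-lipschitz_on ?S f"
      using lipschitz lipschitz_on_subset by blast
    have "connected (f ` ?S)"
      using Suc.IH lipschitz_on_continuous_on[OF f_lipschitz]
      by (blast intro: connected_continuous_image)
    moreover have "(lam * lam ^ n)-lipschitz_on V (\<lambda>x. f ((f ^^ n) x))"
      using Suc.IH f_lipschitz by (blast intro: lipschitz_on_compose2)
    ultimately show ?case
      by (simp add: image_comp)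
  qed
  then show ?thesis ..
qed

lemma pc_recurrent_if_nonexpanding_nbhd:
  assumes x: "x \<in> pc_nonwandering X f N P"
    and V: "openin (top_of_set X) V" "x \<in> V" "V \<subseteq> pc_Xtilde X f N P"
    and nonexpanding: "\<And>n. 1-lipschitz_on V (f ^^ n)"
  shows "pc_recurrent X f N P x"
proof -
  obtain d where d: "d > 0" "ball x d \<inter> X \<subseteq> V"
    using V(1,2) openin_contains_ball by metis
  have "\<exists>\<^sub>F n in sequentially. dist ((f ^^ n) x) x < e" if e: "e > 0" for e
  proof -
    define r where "r = min d (e / 2)"
    have "r > 0"
      using d e by (simp add: r_def)
    then have "\<exists>\<^sub>F n in sequentially. \<exists>z \<in> ball x r \<inter> pc_Xtilde X f N P. (f ^^ n) z \<in> ball x r"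
      using x by (simp add: mem_pc_nonwandering_iff)
    then show ?thesis
    proof (rule frequently_elim1)
      fix n assume "\<exists>z \<in> ball x r \<inter> pc_Xtilde X f N P. (f ^^ n) z \<in> ball x r"
      then obtain z where z: "dist x z < r" "z \<in> pc_Xtilde X f N P" "dist x ((f ^^ n) z) < r"
        by auto
      have "r \<le> d" "r \<le> e / 2"
        by (simp_all add: r_def)
      then have "z \<in> V"
        using z(1,2) d(2) pc_Xtilde_subset[of X f N P] by auto
      \<comment> \<open>the orbit of x shadows the returning orbit of z\<close>
      then have "dist ((f ^^ n) x) ((f ^^ n) z) \<le> dist x z"
        using lipschitz_onD[OF nonexpanding V(2)] by simp
      then show "dist ((f ^^ n) x) x < e"
        using z \<open>r \<le> e / 2\<close> dist_triangle[of "(f ^^ n) x" x "(f ^^ n) z"]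
        by (simp add: dist_commute)
    qed
  qed
  moreover have "x \<in> X"
    using x by (simp add: mem_pc_nonwandering_iff)
  ultimately show ?thesis
    using V by (auto simp: pc_recurrent_def mem_pc_omega_iff)
qed

lemma pc_limit_set_subset_pc_nonwandering:
  assumes "closed X"
  shows "pc_limit_set X f N P \<subseteq> pc_nonwandering X f N P"
proof -
  have "(\<Union>x \<in> pc_Xtilde X f N P. pc_omega X f x) \<subseteq> pc_nonwandering X f N P"
    by (intro UN_least pc_omega_subset_pc_nonwandering)
  then show ?thesis
    unfolding pc_limit_set_def using closed_pc_nonwandering[OF assms] by (rule closure_minimal)
qed

lemma pc_nonwandering_subset_pc_attractor:
  assumes "closed X"
  shows "pc_nonwandering X f N P \<subseteq> pc_attractor X f N P"
  unfolding pc_attractor_def using pc_nonwandering_subset_pc_Lambda_n[OF assms] by blast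

lemma pc_recurrent_if_interior_nonwandering:
  assumes "locally connected X"
    and pieces_open: "\<forall>i<N. openin (top_of_set X) (P i)"
    and pieces_disjoint: "\<forall>i<N. \<forall>j<N. i \<noteq> j \<longrightarrow> P i \<inter> P j = {}"
    and lipschitz: "\<forall>i<N. lam-lipschitz_on (P i) f" and "lam \<le> 1"
    and "x \<in> (top_of_set X interior_of pc_Xtilde X f N P) \<inter> pc_nonwandering X f N P"
  shows "pc_recurrent X f N P x"
proof -
  obtain U where x: "x \<in> pc_nonwandering X f N P" "x \<in> U"
    and U: "openin (top_of_set X) U" "U \<subseteq> pc_Xtilde X f N P"
    using assms(6) by (auto simp: interior_of_def)
  then obtain V where V: "openin (top_of_set X) V" "connected V" "x \<in> V" "V \<subseteq> U"
    using \<open>locally connected X\<close> by (meson locally_connected)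
  have "V \<subseteq> pc_Xtilde X f N P" "V \<noteq> {}"
    using V(3,4) U(2) by auto
  have lipschitz_funpow: "(lam ^ n)-lipschitz_on V (f ^^ n)" for n
    by (rule lipschitz_on_funpow_connected[OF pieces_open pieces_disjoint lipschitz V(2)]) fact+
  have "0 \<le> lam"
    using lipschitz_on_nonneg[OF lipschitz_funpow[of 1]] by simp
  have "1-lipschitz_on V (f ^^ n)" for n
    using lipschitz_funpow[of n] order_refl
    by (rule lipschitz_on_mono) (simp add: \<open>0 \<le> lam\<close> \<open>lam \<le> 1\<close> power_le_one)
  then show ?thesis
    by (rule pc_recurrent_if_nonexpanding_nbhd[OF x(1) V(1,3) \<open>V \<subseteq> pc_Xtilde X f N P\<close>])
qed

theorem theorem2:
  fixes X :: "'a::metric_space set" and f :: "'a \<Rightarrow> 'a"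
    and N :: nat and P :: "nat \<Rightarrow> 'a set" and lam :: real
  assumes "piecewise_contracting X f N P lam"
  shows "pc_limit_set X f N P \<subseteq> pc_nonwandering X f N P
       \<and> pc_nonwandering X f N P \<subseteq> pc_attractor X f N P
       \<and> (\<forall>x \<in> (top_of_set X interior_of pc_Xtilde X f N P) \<inter> pc_nonwandering X f N P.
            pc_recurrent X f N P x)"
proof (intro conjI ballI)
  have "closed X" "locally connected X" "lam \<le> 1"
    and pieces_open: "\<forall>i<N. openin (top_of_set X) (P i)"
    and pieces_disjoint: "\<forall>i<N. \<forall>j<N. i \<noteq> j \<longrightarrow> P i \<inter> P j = {}"
    and lipschitz: "\<forall>i<N. lam-lipschitz_on (P i) f"
    using assms by (auto simp: piecewise_contracting_def lipschitz_on_def compact_imp_closed)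
  show "pc_limit_set X f N P \<subseteq> pc_nonwandering X f N P"
    using \<open>closed X\<close> by (rule pc_limit_set_subset_pc_nonwandering)
  show "pc_nonwandering X f N P \<subseteq> pc_attractor X f N P"
    using \<open>closed X\<close> by (rule pc_nonwandering_subset_pc_attractor)
  fix x assume "x \<in> (top_of_set X interior_of pc_Xtilde X f N P) \<inter> pc_nonwandering X f N P"
  then show "pc_recurrent X f N P x"
    by (rule pc_recurrent_if_interior_nonwandering[OF \<open>locally connected X\<close> pieces_open
          pieces_disjoint lipschitz \<open>lam \<le> 1\<close>])
qed

end
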